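(* Let $\Phi:\{1,\dots,B\}\to\mathcal{A}=\{1,\dots,A\}$ and let $\Delta(\varepsilon)$ be a $B\times B$ stochastic matrix family normally parameterized by $\varepsilon\ge0$; let $Z=\Phi(Y)$ where $Y$ is the stationary Markov chain with transition matrix $\Delta(\varepsilon)$. Let $z_{-m}^0\in\mathcal{A}^{m+1}$ and $\hat z_{-\hat m}^0\in\mathcal{A}^{\hat m+1}$ be two sequences, and let $n\le m,\hat m$ and $k\ge 0$ be such that $z_{-n}^0=\hat z_{-n}^0$ and $$\mathrm{ord}\big(p(z_{-n}^{-1}\mid z_{-m}^{-n-1})\big)\le k,\qquad \mathrm{ord}\big(p(\hat z_{-n}^{-1}\mid \hat z_{-\hat m}^{-n-1})\big)\le k.$$ Then $b_j(z_{-m}^0)=b_j(\hat z_{-\hat m}^0)$ for all $j$ with $0\le j\le n-4k-1$.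
   Context: For $a\in\mathcal{A}$, $\Delta_a$ is the $B\times B$ matrix with $\Delta_a(i,j)=\Delta(i,j)$ if $\Phi(j)=a$ and $0$ otherwise. A matrix family is a weak Black Hole if every $\Delta_a$ is either the zero matrix or of rank one. $\Delta(\varepsilon)$ is normally parameterized by $\varepsilon\ge0$ if (i) each entry is analytic at $\varepsilon=0$, (ii) for $\varepsilon>0$, $\Delta(\varepsilon)$ is non-negative and irreducible, (iii) $\Delta(0)$ is a weak Black Hole. For $\varepsilon>0$ all probabilities refer to the stationary chain; conditional probabilities of hidden-Markov sequences are analytic around $\varepsilon=0$. For a function $f$ analytic at $\varepsilon=0$, $\mathrm{ord}(f)$ is the degree of the first nonzero term of its Taylor series at $0$. $b_j(z_{-m}^0)$ denotes the coefficient of $\varepsilon^j$ in the Taylor expansion of $p(z_0\mid z_{-m}^{-1})=P(Z_0=z_0\mid Z_{-m}^{-1}=z_{-m}^{-1})$ around $\varepsilon=0$. Notation: $z_{s}^{t}=(z_s,\dots,z_t)$. *)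

theory Defs
  imports "HOL-Analysis.Analysis" "HOL-Library.Extended_Nat"
begin

text \<open>States of the Markov chain: a finite type 'b (playing the role of {1..B});
  alphabet: a finite type 'a (playing the role of {1..A}).\<close>

definition stochastic :: "('b::finite \<Rightarrow> 'b \<Rightarrow> real) \<Rightarrow> bool" where
  "stochastic M \<longleftrightarrow> (\<forall>i j. M i j \<ge> 0) \<and> (\<forall>i. (\<Sum>j\<in>UNIV. M i j) = 1)"

fun mpow :: "('b::finite \<Rightarrow> 'b \<Rightarrow> real) \<Rightarrow> nat \<Rightarrow> 'b \<Rightarrow> 'b \<Rightarrow> real" where
  "mpow M 0 i j = (if i = j then 1 else 0)"
| "mpow M (Suc n) i j = (\<Sum>k\<in>UNIV. mpow M n i k * M k j)"

definition nonneg_matrix :: "('b::finite \<Rightarrow> 'b \<Rightarrow> real) \<Rightarrow> bool" where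
  "nonneg_matrix M \<longleftrightarrow> (\<forall>i j. M i j \<ge> 0)"

definition irreducible_matrix :: "('b::finite \<Rightarrow> 'b \<Rightarrow> real) \<Rightarrow> bool" where
  "irreducible_matrix M \<longleftrightarrow> (\<forall>i j. \<exists>n. mpow M n i j > 0)"

definition sub_matrix :: "('b \<Rightarrow> 'a) \<Rightarrow> ('b \<Rightarrow> 'b \<Rightarrow> real) \<Rightarrow> 'a \<Rightarrow> 'b \<Rightarrow> 'b \<Rightarrow> real" where
  "sub_matrix Phi M a i j = (if Phi j = a then M i j else 0)"

definition to_vec_matrix :: "('b::finite \<Rightarrow> 'b \<Rightarrow> real) \<Rightarrow> real^'b^'b" where
  "to_vec_matrix M = (\<chi> i j. M i j)"

definition weak_black_hole :: "('b::finite \<Rightarrow> 'a) \<Rightarrow> ('b \<Rightarrow> 'b \<Rightarrow> real) \<Rightarrow> bool" where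
  "weak_black_hole Phi M \<longleftrightarrow>
     (\<forall>a. (\<forall>i j. sub_matrix Phi M a i j = 0) \<or> rank (to_vec_matrix (sub_matrix Phi M a)) = 1)"

definition analytic_at_zero :: "(real \<Rightarrow> real) \<Rightarrow> bool" where
  "analytic_at_zero f \<longleftrightarrow>
     (\<exists>c r. r > 0 \<and> (\<forall>e. 0 \<le> e \<and> e < r \<longrightarrow> (\<lambda>n. c n * e ^ n) sums f e))"

definition normally_parameterized ::
    "('b::finite \<Rightarrow> 'a) \<Rightarrow> (real \<Rightarrow> 'b \<Rightarrow> 'b \<Rightarrow> real) \<Rightarrow> bool" where
  "normally_parameterized Phi D \<longleftrightarrow>
     (\<forall>i j. analytic_at_zero (\<lambda>e. D e i j)) \<and>
     (\<forall>e>0. nonneg_matrix (D e) \<and> irreducible_matrix (D e)) \<and>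
     weak_black_hole Phi (D 0)"

text \<open>Stationary distribution (unique for irreducible stochastic matrices).\<close>
definition stationary_dist :: "('b::finite \<Rightarrow> 'b \<Rightarrow> real) \<Rightarrow> ('b \<Rightarrow> real) \<Rightarrow> bool" where
  "stationary_dist M p \<longleftrightarrow> (\<forall>i. p i \<ge> 0) \<and> (\<Sum>i\<in>UNIV. p i) = 1 \<and>
     (\<forall>j. (\<Sum>i\<in>UNIV. p i * M i j) = p j)"

definition stat :: "('b::finite \<Rightarrow> 'b \<Rightarrow> real) \<Rightarrow> 'b \<Rightarrow> real" where
  "stat M = (THE p. stationary_dist M p)"

fun path_prob :: "('b::finite \<Rightarrow> 'a) \<Rightarrow> ('b \<Rightarrow> 'b \<Rightarrow> real) \<Rightarrow> 'b \<Rightarrow> 'a list \<Rightarrow> real" where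
  "path_prob Phi M y [] = 1"
| "path_prob Phi M y (a # w) = (\<Sum>y'\<in>{y'. Phi y' = a}. M y y' * path_prob Phi M y' w)"

text \<open>Stationary probability P(Z_s..Z_{s+L-1} = w) of a word w (in time order) for the
  hidden Markov process Z = Phi(Y), Y stationary with transition matrix M.\<close>
fun word_prob :: "('b::finite \<Rightarrow> 'a) \<Rightarrow> ('b \<Rightarrow> 'b \<Rightarrow> real) \<Rightarrow> 'a list \<Rightarrow> real" where
  "word_prob Phi M [] = 1"
| "word_prob Phi M (a # w) = (\<Sum>y\<in>{y. Phi y = a}. stat M y * path_prob Phi M y w)"

text \<open>Conditional probability p(u | v) where v is the past immediately preceding u
  (both in time order), as a function of eps.\<close>
definition cond_prob :: "('b::finite \<Rightarrow> 'a) \<Rightarrow> (real \<Rightarrow> 'b \<Rightarrow> 'b \<Rightarrow> real)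
    \<Rightarrow> 'a list \<Rightarrow> 'a list \<Rightarrow> real \<Rightarrow> real" where
  "cond_prob Phi D u v e = word_prob Phi (D e) (v @ u) / word_prob Phi (D e) v"

text \<open>Taylor coefficients at 0 of a function analytic at 0 (only its values for
  eps > 0 matter), and the order ord(f) (infinity for the zero series).\<close>
definition taylor_coeffs :: "(real \<Rightarrow> real) \<Rightarrow> nat \<Rightarrow> real" where
  "taylor_coeffs f = (THE c. \<exists>r>0. \<forall>e. 0 < e \<and> e < r \<longrightarrow> (\<lambda>n. c n * e ^ n) sums f e)"

definition ord0 :: "(real \<Rightarrow> real) \<Rightarrow> enat" where
  "ord0 f = (if \<forall>n. taylor_coeffs f n = 0 then \<infinity>
             else enat (LEAST n. taylor_coeffs f n \<noteq> 0))"

text \<open>b_j(z_{-m}^0): coefficient of eps^j in p(z_0 | z_{-m}^{-1}); the word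
  z_{-m}^0 is the list z with z!0 = z_{-m}, ..., last z = z_0.\<close>
definition bcoeff :: "('b::finite \<Rightarrow> 'a) \<Rightarrow> (real \<Rightarrow> 'b \<Rightarrow> 'b \<Rightarrow> real) \<Rightarrow> nat \<Rightarrow> 'a list \<Rightarrow> real" where
  "bcoeff Phi D j z = taylor_coeffs (cond_prob Phi D [last z] (butlast z)) j"

end

theory Submission
  imports Defs
begin

(*
  All quantities are germs at e = 0+ of convergent power series. By Cramer's rule the stationary
  distribution is a ratio of determinants that are polynomial in the entries of D e, so it and
  every word probability P(w) = sum_x pi(x) (D_w 1)(x) has such an expansion. Because D 0 is a
  weak black hole, the 2x2 minors inside each block D_a vanish at 0, and by Cauchy-Binet the 2x2
  minors of the vectors D_u c and D_u d are divisible by e^|u|.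

  Splitting P(v u w) = sum_y alpha_v(y) (D_u D_w 1)(y), with forward vector alpha_v dominated by
  P(v), the cross difference P(v u z0) P(v' u) - P(v' u z0) P(v u) becomes a bilinear form in
  those minors, of order at least ord P(v) + ord P(v') + |u|. It equals
  (p(z0|v u) - p(z0|v' u)) p(u|v) P(v) p(u|v') P(v'), so the two conditional probabilities agree
  up to order |u| - ord p(u|v) - ord p(u|v') >= n - 2k, more than the n - 4k claimed.
*)

section \<open>Power series expansions from the right at 0\<close>

text \<open>Only values for \<open>e > 0\<close> matter: the hypotheses say nothing about negative \<open>e\<close>.\<close>
definition has_fps_expansion_right :: "(real \<Rightarrow> real) \<Rightarrow> real fps \<Rightarrow> bool"
    (infixl \<open>has'_fps'_expansion'_right\<close> 60) where
  "f has_fps_expansion_right F \<longleftrightarrow>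
     (\<exists>g. g has_fps_expansion F \<and> (\<forall>\<^sub>F e in at_right 0. f e = g e))"

lemma has_fps_expansion_rightI:
  "g has_fps_expansion F \<Longrightarrow> (\<forall>\<^sub>F e in at_right 0. f e = g e) \<Longrightarrow> f has_fps_expansion_right F"
  unfolding has_fps_expansion_right_def by blast

lemma has_fps_expansion_right_cong:
  assumes "f has_fps_expansion_right F" "\<forall>\<^sub>F e in at_right 0. f e = g e"
  shows "g has_fps_expansion_right F"
proof -
  obtain h where "h has_fps_expansion F" "\<forall>\<^sub>F e in at_right 0. f e = h e"
    using assms(1) by (auto simp: has_fps_expansion_right_def)
  with assms(2) show ?thesis
    by (auto intro!: has_fps_expansion_rightI elim: eventually_elim2)
qed

lemma has_fps_expansion_right_const: "(\<lambda>_. c) has_fps_expansion_right fps_const c"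
  by (rule has_fps_expansion_rightI[OF has_fps_expansion_const]) simp

lemma has_fps_expansion_right_0 [simp]: "(\<lambda>_. 0) has_fps_expansion_right 0"
  using has_fps_expansion_right_const[of 0] by simp

lemma has_fps_expansion_right_1 [simp]: "(\<lambda>_. 1) has_fps_expansion_right 1"
  using has_fps_expansion_right_const[of 1] by simp

lemma has_fps_expansion_right_of_bool [simp]:
  "(\<lambda>_. of_bool b) has_fps_expansion_right of_bool b"
  by (cases b) simp_all

lemma has_fps_expansion_right_add:
  assumes "f has_fps_expansion_right F" "g has_fps_expansion_right G"
  shows "(\<lambda>e. f e + g e) has_fps_expansion_right F + G"
proof -
  obtain f' g' where "f' has_fps_expansion F" "g' has_fps_expansion G"
    "\<forall>\<^sub>F e in at_right 0. f e = f' e" "\<forall>\<^sub>F e in at_right 0. g e = g' e"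
    using assms by (auto simp: has_fps_expansion_right_def)
  then show ?thesis
    by (auto intro!: has_fps_expansion_rightI has_fps_expansion_add elim: eventually_elim2)
qed

lemma has_fps_expansion_right_mult:
  assumes "f has_fps_expansion_right F" "g has_fps_expansion_right G"
  shows "(\<lambda>e. f e * g e) has_fps_expansion_right F * G"
proof -
  obtain f' g' where "f' has_fps_expansion F" "g' has_fps_expansion G"
    "\<forall>\<^sub>F e in at_right 0. f e = f' e" "\<forall>\<^sub>F e in at_right 0. g e = g' e"
    using assms by (auto simp: has_fps_expansion_right_def)
  then show ?thesis
    by (auto intro!: has_fps_expansion_rightI has_fps_expansion_mult elim: eventually_elim2)
qed

lemma has_fps_expansion_right_diff:
  assumes "f has_fps_expansion_right F" "g has_fps_expansion_right G"
  shows "(\<lambda>e. f e - g e) has_fps_expansion_right F - G"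
  using has_fps_expansion_right_add[OF assms(1) has_fps_expansion_right_mult[OF
        has_fps_expansion_right_const[of "-1"] assms(2)]]
  by (simp add: fps_const_neg[symmetric])

lemma has_fps_expansion_right_sum:
  "(\<And>x. x \<in> A \<Longrightarrow> f x has_fps_expansion_right F x)
    \<Longrightarrow> (\<lambda>e. \<Sum>x\<in>A. f x e) has_fps_expansion_right (\<Sum>x\<in>A. F x)"
proof (induction A rule: infinite_finite_induct)
  case (insert x A)
  then show ?case by (simp add: has_fps_expansion_right_add)
qed simp_all

lemma has_fps_expansion_right_prod:
  "(\<And>x. x \<in> A \<Longrightarrow> f x has_fps_expansion_right F x)
    \<Longrightarrow> (\<lambda>e. \<Prod>x\<in>A. f x e) has_fps_expansion_right (\<Prod>x\<in>A. F x)"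
proof (induction A rule: infinite_finite_induct)
  case (insert x A)
  then show ?case by (simp add: has_fps_expansion_right_mult)
qed simp_all

lemma has_fps_expansion_right_det:
  assumes "\<And>i j. (\<lambda>e. A e $ i $ j) has_fps_expansion_right B $ i $ j"
  shows "(\<lambda>e. det (A e)) has_fps_expansion_right det B"
  unfolding det_def
proof (intro has_fps_expansion_right_sum has_fps_expansion_right_mult
    has_fps_expansion_right_prod assms)
  fix p :: "'a \<Rightarrow> 'a"
  show "(\<lambda>e. of_int (sign p)) has_fps_expansion_right of_int (sign p)"
    using has_fps_expansion_right_const[of "of_int (sign p)"] by (simp add: fps_of_int)
qed

lemma has_fps_expansion_right_eventually_eval:
  assumes "f has_fps_expansion_right F"
  shows "\<forall>\<^sub>F e in at_right 0. f e = eval_fps F e \<and> ereal \<bar>e\<bar> < fps_conv_radius F"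
proof -
  obtain g where g: "g has_fps_expansion F" "\<forall>\<^sub>F e in at_right 0. f e = g e"
    using assms by (auto simp: has_fps_expansion_right_def)
  then have "\<forall>\<^sub>F e in nhds 0. eval_fps F e = g e \<and> e \<in> eball 0 (fps_conv_radius F)"
    by (intro eventually_conj eventually_nhds_in_open)
      (auto simp: has_fps_expansion_def zero_ereal_def)
  then have "\<forall>\<^sub>F e in at_right 0. eval_fps F e = g e \<and> e \<in> eball 0 (fps_conv_radius F)"
    by (rule filter_leD[OF at_within_le_nhds])
  with g(2) show ?thesis
    by eventually_elim (auto simp: dist_norm)
qed

lemma has_fps_expansion_right_0_iff:
  "f has_fps_expansion_right 0 \<longleftrightarrow> (\<forall>\<^sub>F e in at_right 0. f e = 0)"
proof
  assume "f has_fps_expansion_right 0"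
  from has_fps_expansion_right_eventually_eval[OF this]
  show "\<forall>\<^sub>F e in at_right 0. f e = 0"
    by eventually_elim simp
next
  assume "\<forall>\<^sub>F e in at_right 0. f e = 0"
  then have "\<forall>\<^sub>F e in at_right 0. 0 = f e"
    by eventually_elim simp
  from has_fps_expansion_right_cong[OF has_fps_expansion_right_0 this]
  show "f has_fps_expansion_right 0" .
qed

lemma has_fps_expansion_right_leading_coeff:
  assumes "f has_fps_expansion_right F" "F \<noteq> 0"
  shows "((\<lambda>e. f e / e ^ subdegree F) \<longlongrightarrow> fps_nth F (subdegree F)) (at_right 0)"
proof -
  define d where "d = subdegree F"
  obtain g where g: "g has_fps_expansion F" "\<forall>\<^sub>F e in at_right 0. f e = g e"
    using assms by (auto simp: has_fps_expansion_right_def)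
  define h where "h x = (if x = 0 then fps_nth F d else g x / x ^ d)" for x :: real
  have "h has_fps_expansion fps_shift d F"
    unfolding h_def d_def by (rule has_fps_expansion_shift[OF g(1)]) auto
  then have "isCont h 0" by (rule has_fps_expansion_imp_continuous)
  then have "(h \<longlongrightarrow> fps_nth F d) (at_right 0)"
    by (simp add: isCont_def filterlim_at_split h_def)
  moreover have "\<forall>\<^sub>F e in at_right 0. h e = f e / e ^ d"
    using g(2) eventually_at_right_less[of 0] by eventually_elim (simp add: h_def)
  ultimately show ?thesis
    unfolding d_def by (simp add: tendsto_cong)
qed

lemma has_fps_expansion_right_unique:
  assumes "f has_fps_expansion_right F" "f has_fps_expansion_right G"
  shows "F = G"
proof (rule ccontr)
  assume "F \<noteq> G"
  then have nz: "F - G \<noteq> 0" by simp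
  have "(\<lambda>e. f e - f e) has_fps_expansion_right F - G"
    by (rule has_fps_expansion_right_diff[OF assms])
  from has_fps_expansion_right_leading_coeff[OF this nz]
  have "((\<lambda>_. 0) \<longlongrightarrow> fps_nth (F - G) (subdegree (F - G))) (at_right (0::real))"
    by simp
  then have "fps_nth (F - G) (subdegree (F - G)) = 0"
    by (rule tendsto_const_iff[OF trivial_limit_at_right_real, THEN iffD1, symmetric])
  with nz show False by (simp only: nth_subdegree_zero_iff)
qed

lemma abs_le_imp_subdegree_le:
  assumes g: "g has_fps_expansion_right G" and h: "h has_fps_expansion_right H"
    and "G \<noteq> 0" "H \<noteq> 0" and le: "\<forall>\<^sub>F e in at_right 0. \<bar>g e\<bar> \<le> \<bar>h e\<bar>"
  shows "subdegree H \<le> subdegree G"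
proof (rule ccontr)
  define dg dh where "dg = subdegree G" and "dh = subdegree H"
  assume "\<not> subdegree H \<le> subdegree G"
  then have "dg < dh" by (simp add: dg_def dh_def)
  have lim_g: "((\<lambda>e. g e / e ^ dg) \<longlongrightarrow> fps_nth G dg) (at_right 0)"
    unfolding dg_def by (rule has_fps_expansion_right_leading_coeff[OF g \<open>G \<noteq> 0\<close>])
  have "((\<lambda>e. e ^ (dh - dg) * (h e / e ^ dh)) \<longlongrightarrow> 0 ^ (dh - dg) * fps_nth H dh) (at_right 0)"
    unfolding dh_def
    by (intro tendsto_mult tendsto_power has_fps_expansion_right_leading_coeff[OF h \<open>H \<noteq> 0\<close>])
      simp
  then have lim0: "((\<lambda>e. e ^ (dh - dg) * (h e / e ^ dh)) \<longlongrightarrow> 0) (at_right 0)"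
    using \<open>dg < dh\<close> by (simp add: power_0_left)
  have "\<forall>\<^sub>F e in at_right 0. e ^ (dh - dg) * (h e / e ^ dh) = h e / e ^ dg"
    using eventually_at_right_less[of 0]
  proof eventually_elim
    case (elim e)
    have "e ^ dh = e ^ (dh - dg) * e ^ dg"
      using \<open>dg < dh\<close> by (simp flip: power_add)
    with elim show ?case by (simp add: field_simps)
  qed
  from tendsto_cong[OF this, THEN iffD1, OF lim0]
  have lim_h: "((\<lambda>e. h e / e ^ dg) \<longlongrightarrow> 0) (at_right 0)" .
  have "\<forall>\<^sub>F e in at_right 0. \<bar>g e / e ^ dg\<bar> \<le> \<bar>h e / e ^ dg\<bar>"
    using le eventually_at_right_less[of 0]
    by eventually_elim (simp add: divide_right_mono)
  from tendsto_le[OF trivial_limit_at_right_real tendsto_rabs[OF lim_h] tendsto_rabs[OF lim_g] this]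
  have "fps_nth G dg = 0" by simp
  with \<open>G \<noteq> 0\<close> show False by (simp add: dg_def)
qed

lemma has_fps_expansion_right_divide:
  assumes g: "g has_fps_expansion_right G" and h: "h has_fps_expansion_right H"
    and le: "\<forall>\<^sub>F e in at_right 0. \<bar>g e\<bar> \<le> \<bar>h e\<bar>"
  shows "(\<lambda>e. g e / h e) has_fps_expansion_right G / H"
proof (cases "G = 0 \<or> H = 0")
  case True
  then have "\<forall>\<^sub>F e in at_right 0. g e = 0"
    using g h le by (auto simp: has_fps_expansion_right_0_iff elim: eventually_elim2)
  then have "\<forall>\<^sub>F e in at_right 0. g e / h e = 0"
    by eventually_elim simp
  moreover have "G = 0"
    using has_fps_expansion_right_unique[OF g] \<open>\<forall>\<^sub>F e in at_right 0. g e = 0\<close>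
    by (simp add: has_fps_expansion_right_0_iff)
  ultimately show ?thesis by (simp add: has_fps_expansion_right_0_iff)
next
  case False
  obtain g' h' where "g' has_fps_expansion G" "h' has_fps_expansion H"
    "\<forall>\<^sub>F e in at_right 0. g e = g' e" "\<forall>\<^sub>F e in at_right 0. h e = h' e"
    using g h by (auto simp: has_fps_expansion_right_def)
  moreover have "subdegree H \<le> subdegree G"
    using False by (intro abs_le_imp_subdegree_le[OF g h _ _ le]) auto
  ultimately have "(\<lambda>x. if x = 0 then fps_nth G (subdegree H) / fps_nth H (subdegree H)
      else g' x / h' x) has_fps_expansion G / H"
    using False by (intro has_fps_expansion_divide) auto
  moreover have "\<forall>\<^sub>F e in at_right 0. g e / h e =
      (if e = 0 then fps_nth G (subdegree H) / fps_nth H (subdegree H) else g' e / h' e)"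
    using \<open>\<forall>\<^sub>F e in at_right 0. g e = g' e\<close> \<open>\<forall>\<^sub>F e in at_right 0. h e = h' e\<close>
      eventually_at_right_less[of 0]
    by eventually_elim simp
  ultimately show ?thesis by (rule has_fps_expansion_rightI)
qed

lemma has_fps_expansion_right_sums:
  assumes "r > 0" and sums: "\<And>e. 0 < e \<Longrightarrow> e < r \<Longrightarrow> (\<lambda>n. c n * e ^ n) sums f e"
  shows "f has_fps_expansion_right Abs_fps c"
proof (rule has_fps_expansion_rightI)
  have "summable (\<lambda>n. c n * (r / 2) ^ n)"
    using sums[of "r / 2"] \<open>r > 0\<close> by (auto simp: sums_iff)
  then have "ereal (r / 2) \<le> conv_radius c"
    using conv_radius_geI[of c "r / 2"] \<open>r > 0\<close> by simp
  moreover have "ereal 0 < ereal (r / 2)"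
    using \<open>r > 0\<close> by simp
  ultimately have "ereal 0 < conv_radius c"
    by (rule order.strict_trans2[rotated])
  then have "fps_conv_radius (Abs_fps c) > 0"
    by (simp add: fps_conv_radius_def fps.Abs_fps_inverse zero_ereal_def)
  then show "eval_fps (Abs_fps c) has_fps_expansion Abs_fps c"
    by (rule eval_fps_has_fps_expansion)
  show "\<forall>\<^sub>F e in at_right 0. f e = eval_fps (Abs_fps c) e"
  proof (rule eventually_at_rightI[of 0 r])
    fix e assume "e \<in> {0<..<r}"
    with sums show "f e = eval_fps (Abs_fps c) e"
      by (simp add: eval_fps_def sums_iff)
  qed (use \<open>r > 0\<close> in simp)
qed

lemma taylor_coeffs_eq:
  assumes "f has_fps_expansion_right F"
  shows "taylor_coeffs f = fps_nth F"
  unfolding taylor_coeffs_def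
proof (rule the_equality)
  obtain b where "b > 0" and b: "\<And>e. 0 < e \<Longrightarrow> e < b \<Longrightarrow>
      f e = eval_fps F e \<and> ereal \<bar>e\<bar> < fps_conv_radius F"
    using has_fps_expansion_right_eventually_eval[OF assms]
    by (auto simp: eventually_at_right_field)
  then show "\<exists>r>0. \<forall>e. 0 < e \<and> e < r \<longrightarrow> (\<lambda>n. fps_nth F n * e ^ n) sums f e"
    by (metis sums_eval_fps real_norm_def)
next
  fix c assume "\<exists>r>0. \<forall>e. 0 < e \<and> e < r \<longrightarrow> (\<lambda>n. c n * e ^ n) sums f e"
  then have "f has_fps_expansion_right Abs_fps c"
    by (blast intro: has_fps_expansion_right_sums)
  then show "c = fps_nth F"
    using has_fps_expansion_right_unique[OF _ assms] by fastforce
qed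

lemma ord0_eq:
  assumes "f has_fps_expansion_right F"
  shows "ord0 f = (if F = 0 then \<infinity> else enat (subdegree F))"
  by (simp add: ord0_def taylor_coeffs_eq[OF assms] fps_eq_iff subdegree_def)

lemma analytic_at_zero_expansion:
  assumes "analytic_at_zero f"
  obtains F where "f has_fps_expansion_right F" "fps_nth F 0 = f 0"
proof -
  obtain c r where "r > 0" and sums: "\<And>e. 0 \<le> e \<Longrightarrow> e < r \<Longrightarrow> (\<lambda>n. c n * e ^ n) sums f e"
    using assms unfolding analytic_at_zero_def by blast
  then have "f has_fps_expansion_right Abs_fps c"
    by (intro has_fps_expansion_right_sums) auto
  moreover have "fps_nth (Abs_fps c) 0 = f 0"
    using sums[of 0] \<open>r > 0\<close> by (simp add: sums_iff fps.Abs_fps_inverse)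
  ultimately show ?thesis by (rule that)
qed

section \<open>Divisibility by powers of X and two-by-two minors\<close>

lemma fps_X_power_dvd_iff:
  fixes F :: "'a::field fps"
  shows "fps_X ^ n dvd F \<longleftrightarrow> F = 0 \<or> n \<le> subdegree F"
  by (cases "F = 0") (simp_all add: fps_dvd_iff)

lemma fps_X_power_dvd_iff_nth:
  fixes F :: "'a::field fps"
  shows "fps_X ^ n dvd F \<longleftrightarrow> (\<forall>i<n. fps_nth F i = 0)"
proof
  assume "fps_X ^ n dvd F"
  then obtain G where "F = fps_X ^ n * G" ..
  then show "\<forall>i<n. fps_nth F i = 0"
    by (simp add: fps_X_power_mult_nth)
next
  assume "\<forall>i<n. fps_nth F i = 0"
  then show "fps_X ^ n dvd F"
    by (cases "F = 0") (simp_all add: fps_X_power_dvd_iff subdegree_geI)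
qed

lemma fps_X_dvd_iff:
  fixes F :: "'a::field fps"
  shows "fps_X dvd F \<longleftrightarrow> fps_nth F 0 = 0"
  using fps_X_power_dvd_iff_nth[of 1 F] by simp

lemma sum_product_minor:
  fixes a b U V :: "'i \<Rightarrow> 'r::comm_ring_1"
  shows "(\<Sum>k\<in>B. a k * U k) * (\<Sum>l\<in>B. b l * V l) - (\<Sum>l\<in>B. b l * U l) * (\<Sum>k\<in>B. a k * V k)
    = (\<Sum>k\<in>B. \<Sum>l\<in>B. a k * b l * (U k * V l - U l * V k))"
proof -
  have "(\<Sum>l\<in>B. b l * U l) * (\<Sum>k\<in>B. a k * V k) = (\<Sum>k\<in>B. \<Sum>l\<in>B. b l * U l * (a k * V k))"
    unfolding sum_product by (rule sum.swap)
  then have "(\<Sum>k\<in>B. a k * U k) * (\<Sum>l\<in>B. b l * V l) - (\<Sum>l\<in>B. b l * U l) * (\<Sum>k\<in>B. a k * V k)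
      = (\<Sum>k\<in>B. \<Sum>l\<in>B. a k * U k * (b l * V l) - b l * U l * (a k * V k))"
    by (simp only: sum_product sum_subtractf)
  also have "\<dots> = (\<Sum>k\<in>B. \<Sum>l\<in>B. a k * b l * (U k * V l - U l * V k))"
    by (intro sum.cong refl) (simp add: algebra_simps)
  finally show ?thesis .
qed

lemma sum_product_minor_double:
  fixes a b U V :: "'i \<Rightarrow> 'r::comm_ring_1"
  shows "2 * ((\<Sum>k\<in>B. a k * U k) * (\<Sum>l\<in>B. b l * V l) - (\<Sum>l\<in>B. b l * U l) * (\<Sum>k\<in>B. a k * V k))
    = (\<Sum>k\<in>B. \<Sum>l\<in>B. (a k * b l - a l * b k) * (U k * V l - U l * V k))"
proof -
  define S where "S = (\<Sum>k\<in>B. \<Sum>l\<in>B. a k * b l * (U k * V l - U l * V k))"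
  have "(\<Sum>k\<in>B. \<Sum>l\<in>B. a l * b k * (U k * V l - U l * V k))
      = (\<Sum>l\<in>B. \<Sum>k\<in>B. a l * b k * (U k * V l - U l * V k))"
    by (rule sum.swap)
  also have "\<dots> = (\<Sum>l\<in>B. \<Sum>k\<in>B. - (a l * b k * (U l * V k - U k * V l)))"
    by (intro sum.cong refl) (simp add: algebra_simps)
  also have "\<dots> = - S"
    by (simp add: S_def sum_negf)
  finally have swapped: "(\<Sum>k\<in>B. \<Sum>l\<in>B. a l * b k * (U k * V l - U l * V k)) = - S" .
  have "(\<Sum>k\<in>B. \<Sum>l\<in>B. (a k * b l - a l * b k) * (U k * V l - U l * V k)) = S - (- S)"
    unfolding S_def by (simp only: left_diff_distrib sum_subtractf swapped[unfolded S_def])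
  also have "\<dots> = 2 * S"
    by simp
  finally show ?thesis
    unfolding S_def sum_product_minor by simp
qed
lemma rank_le_1_minor_eq_0:
  fixes A :: "real^'n^'m"
  assumes "rank A \<le> 1"
  shows "A $ i $ k * A $ j $ l = A $ i $ l * A $ j $ k"
proof (rule ccontr)
  assume minor: "A $ i $ k * A $ j $ l \<noteq> A $ i $ l * A $ j $ k"
  have "A $ j \<noteq> 0"
    using minor by (metis mult_zero_right zero_index)
  moreover have "A $ i \<notin> span {A $ j}"
  proof
    assume "A $ i \<in> span {A $ j}"
    then obtain t where "A $ i = t *\<^sub>R A $ j"
      by (auto simp: span_singleton)
    with minor show False
      by (simp add: algebra_simps)
  qed
  ultimately have "independent {A $ i, A $ j}"
    using independent_empty by (intro independent_insertI) auto
  moreover have "A $ i \<noteq> A $ j"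
    using \<open>A $ i \<notin> span {A $ j}\<close> span_base by blast
  ultimately have "card {A $ i, A $ j} \<le> dim (rows A)"
    by (intro independent_card_le_dim) (auto simp: rows_def row_def)
  with \<open>A $ i \<noteq> A $ j\<close> assms show False
    by (simp add: row_rank_def)
qed

lemma weak_black_hole_minor_eq_0:
  fixes M :: "'b::finite \<Rightarrow> 'b \<Rightarrow> real"
  assumes "weak_black_hole Phi M" and "Phi k = Phi l"
  shows "M i k * M j l = M i l * M j k"
proof (cases "\<forall>i j. sub_matrix Phi M (Phi k) i j = 0")
  case True
  then have "M i k = 0" "M i l = 0"
    using assms(2) by (metis sub_matrix_def)+
  then show ?thesis by simp
next
  case False
  with assms(1) have "rank (to_vec_matrix (sub_matrix Phi M (Phi k))) \<le> 1"
    unfolding weak_black_hole_def by (metis order_refl)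
  from rank_le_1_minor_eq_0[OF this, of i k j l] assms(2)
  show ?thesis
    by (simp add: to_vec_matrix_def sub_matrix_def)
qed

section \<open>Forward and backward sums along a word\<close>

text \<open>In the paper's notation \<open>backward Phi M w c = M\<^sub>w\<^sub>1 \<cdots> M\<^sub>w\<^sub>n c\<close> and
  \<open>forward Phi M p w = p M\<^sub>w\<^sub>1 \<cdots> M\<^sub>w\<^sub>n\<close>, where \<open>M\<^sub>a\<close> keeps the columns of the states
  emitting \<open>a\<close>.\<close>
fun backward :: "('b::finite \<Rightarrow> 'a) \<Rightarrow> ('b \<Rightarrow> 'b \<Rightarrow> 'r::comm_semiring_1) \<Rightarrow> 'a list
    \<Rightarrow> ('b \<Rightarrow> 'r) \<Rightarrow> 'b \<Rightarrow> 'r" where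
  "backward Phi M [] c x = c x"
| "backward Phi M (a # w) c x = (\<Sum>y | Phi y = a. M x y * backward Phi M w c y)"

definition forward :: "('b::finite \<Rightarrow> 'a) \<Rightarrow> ('b \<Rightarrow> 'b \<Rightarrow> 'r::comm_semiring_1) \<Rightarrow> ('b \<Rightarrow> 'r)
    \<Rightarrow> 'a list \<Rightarrow> 'b \<Rightarrow> 'r" where
  "forward Phi M p w y = (\<Sum>x\<in>UNIV. p x * backward Phi M w (\<lambda>z. of_bool (z = y)) x)"

lemma backward_append: "backward Phi M (u @ w) c x = backward Phi M u (backward Phi M w c) x"
  by (induction u arbitrary: x) auto

lemma backward_linear:
  "backward Phi M w c x = (\<Sum>y\<in>UNIV. backward Phi M w (\<lambda>z. of_bool (z = y)) x * c y)"
proof (induction w arbitrary: x)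
  case Nil
  have "(\<Sum>y\<in>UNIV. of_bool (x = y) * c y) = (\<Sum>y\<in>UNIV. if y = x then c x else 0)"
    by (intro sum.cong) auto
  then show ?case by simp
next
  case (Cons a w)
  then show ?case
    by (simp add: sum_distrib_left sum_distrib_right mult.assoc sum.swap[of _ "{y. Phi y = a}"])
qed

lemma sum_backward_append:
  "(\<Sum>x\<in>UNIV. p x * backward Phi M (v @ w) c x)
    = (\<Sum>y\<in>UNIV. forward Phi M p v y * backward Phi M w c y)"
proof -
  have "(\<Sum>x\<in>UNIV. p x * backward Phi M (v @ w) c x)
      = (\<Sum>x\<in>UNIV. \<Sum>y\<in>UNIV. p x * backward Phi M v (\<lambda>z. of_bool (z = y)) x * backward Phi M w c y)"
    by (subst backward_append, subst backward_linear) (simp add: sum_distrib_left mult.assoc)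
  also have "\<dots> = (\<Sum>y\<in>UNIV. forward Phi M p v y * backward Phi M w c y)"
    unfolding forward_def by (subst sum.swap) (simp add: sum_distrib_right)
  finally show ?thesis .
qed

lemma path_prob_eq_backward: "path_prob Phi M y w = backward Phi M w (\<lambda>_. 1) y"
  by (induction w arbitrary: y) auto

lemma word_prob_eq_backward:
  assumes "stationary_dist M (stat M)"
  shows "word_prob Phi M w = (\<Sum>x\<in>UNIV. stat M x * backward Phi M w (\<lambda>_. 1) x)"
proof (cases w)
  case Nil
  with assms show ?thesis by (simp add: stationary_dist_def)
next
  case (Cons a w')
  have "word_prob Phi M w = (\<Sum>y | Phi y = a. (\<Sum>x\<in>UNIV. stat M x * M x y) * path_prob Phi M y w')"
    using assms by (simp add: Cons stationary_dist_def)
  also have "\<dots> = (\<Sum>y | Phi y = a. \<Sum>x\<in>UNIV. stat M x * (M x y * backward Phi M w' (\<lambda>_. 1) y))"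
    by (simp add: path_prob_eq_backward sum_distrib_right mult.assoc)
  also have "\<dots> = (\<Sum>x\<in>UNIV. stat M x * backward Phi M w (\<lambda>_. 1) x)"
    by (subst sum.swap) (simp add: Cons sum_distrib_left)
  finally show ?thesis .
qed

lemma backward_nonneg:
  fixes M :: "'b::finite \<Rightarrow> 'b \<Rightarrow> real"
  assumes "\<And>x y. M x y \<ge> 0" "\<And>y. c y \<ge> 0"
  shows "backward Phi M w c x \<ge> 0"
  by (induction w arbitrary: x) (simp_all add: assms sum_nonneg)

lemma backward_le_1:
  assumes "stochastic M"
  shows "backward Phi M w (\<lambda>_. 1) x \<le> 1"
proof (induction w arbitrary: x)
  case (Cons a w)
  have M: "\<And>x y. M x y \<ge> 0" "\<And>x. (\<Sum>y\<in>UNIV. M x y) = 1"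
    using assms by (auto simp: stochastic_def)
  have "backward Phi M (a # w) (\<lambda>_. 1) x \<le> (\<Sum>y | Phi y = a. M x y)"
    unfolding backward.simps by (intro sum_mono mult_left_le Cons M)
  also have "\<dots> \<le> (\<Sum>y\<in>UNIV. M x y)"
    using M by (intro sum_mono2) auto
  finally show ?case using M by simp
qed simp

lemma forward_nonneg:
  fixes M :: "'b::finite \<Rightarrow> 'b \<Rightarrow> real"
  assumes "\<And>x y. M x y \<ge> 0" "\<And>x. p x \<ge> 0"
  shows "forward Phi M p w y \<ge> 0"
  unfolding forward_def using assms by (intro sum_nonneg mult_nonneg_nonneg backward_nonneg) auto

text \<open>Cauchy-Binet for \<open>2 \<times> 2\<close> minors: summing over ordered instead of unordered pairs of
  intermediate states counts every term twice, hence the factor \<open>2\<close> and characteristic \<open>0\<close>.\<close>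
lemma backward_minor_dvd:
  fixes M :: "'b::finite \<Rightarrow> 'b \<Rightarrow> 'a::field_char_0 fps"
  assumes minor: "\<And>i j k l. Phi k = Phi l \<Longrightarrow> fps_X dvd (M i k * M j l - M i l * M j k)"
  shows "fps_X ^ length w dvd
    backward Phi M w c i * backward Phi M w d j - backward Phi M w c j * backward Phi M w d i"
proof (induction w arbitrary: i j)
  case (Cons a w)
  let ?U = "backward Phi M w c" and ?V = "backward Phi M w d"
  have "fps_X ^ Suc (length w) dvd
      (\<Sum>k | Phi k = a. \<Sum>l | Phi l = a.
        (M i k * M j l - M i l * M j k) * (?U k * ?V l - ?U l * ?V k))"
    by (intro dvd_sum) (simp add: Cons.IH minor mult_dvd_mono)
  then have "fps_X ^ length (a # w) dvd 2 *
      (backward Phi M (a # w) c i * backward Phi M (a # w) d j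
        - backward Phi M (a # w) c j * backward Phi M (a # w) d i)"
    by (simp only: length_Cons backward.simps sum_product_minor_double)
  moreover have "is_unit (2 :: 'a fps)"
    by simp
  ultimately show ?case
    using dvd_mult_unit_iff' by blast
qed simp

section \<open>Stationary distributions by Cramer's rule\<close>

lemma mpow_nonneg: "nonneg_matrix P \<Longrightarrow> mpow P n i j \<ge> 0"
  by (induction n arbitrary: j) (auto simp: nonneg_matrix_def intro!: sum_nonneg)

lemma irreducible_closed_set:
  assumes nonneg: "nonneg_matrix P" and irr: "irreducible_matrix P"
    and closed: "\<And>i j. i \<in> S \<Longrightarrow> P i j > 0 \<Longrightarrow> j \<in> S" and "i \<in> S"
  shows "j \<in> S"
proof -
  have "mpow P n i j > 0 \<Longrightarrow> j \<in> S" for n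
  proof (induction n arbitrary: j)
    case 0
    with \<open>i \<in> S\<close> show ?case by (simp split: if_splits)
  next
    case (Suc n)
    then obtain k where k: "mpow P n i k * P k j > 0"
      by (metis (no_types, lifting) mpow.simps(2) not_le sum_nonpos)
    moreover have "mpow P n i k \<ge> 0" "P k j \<ge> 0"
      using nonneg mpow_nonneg[OF nonneg] by (auto simp: nonneg_matrix_def)
    ultimately have "mpow P n i k > 0" "P k j > 0"
      by (auto simp: zero_less_mult_iff)
    with Suc.IH closed show ?case by blast
  qed
  with irr show ?thesis by (auto simp: irreducible_matrix_def)
qed

lemma invariant_vector_pos:
  fixes P :: "'b::finite \<Rightarrow> 'b \<Rightarrow> real"
  assumes st: "stochastic P" and irr: "irreducible_matrix P"
    and inv: "\<And>j. (\<Sum>i\<in>UNIV. x i * P i j) = x j" and "x i0 > 0"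
  shows "x j > 0"
proof -
  have P: "\<And>i j. P i j \<ge> 0" "\<And>i. (\<Sum>j\<in>UNIV. P i j) = 1"
    using st by (auto simp: stochastic_def)
  define q where "q i = max (x i) 0" for i
  have q_nonneg: "q i \<ge> 0" for i
    by (simp add: q_def)
  have q_le: "q j \<le> (\<Sum>i\<in>UNIV. q i * P i j)" for j
  proof -
    have "x j \<le> (\<Sum>i\<in>UNIV. q i * P i j)"
      unfolding inv[of j, symmetric] by (intro sum_mono mult_right_mono) (auto simp: q_def P)
    moreover have "0 \<le> (\<Sum>i\<in>UNIV. q i * P i j)"
      by (intro sum_nonneg) (simp add: q_nonneg P)
    ultimately show ?thesis by (simp add: q_def)
  qed
  have "(\<Sum>j\<in>UNIV. \<Sum>i\<in>UNIV. q i * P i j) = (\<Sum>j\<in>UNIV. q j)"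
    by (subst sum.swap) (simp add: sum_distrib_left[symmetric] P)
  then have q_inv: "(\<Sum>i\<in>UNIV. q i * P i j) = q j" for j
    using sum_mono_inv[of q UNIV "\<lambda>j. \<Sum>i\<in>UNIV. q i * P i j" j] q_le by simp
  have "j \<in> {i. q i > 0}"
  proof (rule irreducible_closed_set[OF _ irr])
    show "nonneg_matrix P" using P by (simp add: nonneg_matrix_def)
    show "i0 \<in> {i. q i > 0}" using \<open>x i0 > 0\<close> by (simp add: q_def)
    fix i j assume "i \<in> {i. q i > 0}" "P i j > 0"
    then have "0 < q i * P i j" by simp
    also have "\<dots> \<le> (\<Sum>i\<in>UNIV. q i * P i j)"
      by (rule member_le_sum) (auto simp: q_nonneg P)
    finally show "j \<in> {i. q i > 0}" by (simp add: q_inv)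
  qed
  then show ?thesis by (simp add: q_def)
qed

text \<open>The stationarity equations with the one for state \<open>b0\<close> replaced by the normalisation
  \<open>\<Sum>i. x i = 1\<close>; for irreducible \<open>P\<close> this square system has the stationary distribution as its
  unique solution.\<close>
definition stationary_system :: "('b::finite \<Rightarrow> 'b \<Rightarrow> 'r::comm_ring_1) \<Rightarrow> 'b \<Rightarrow> 'r^'b^'b" where
  "stationary_system P b0 = (\<chi> j i. if j = b0 then 1 else of_bool (i = j) - P i j)"

lemma stationary_system_mult_nth:
  "(stationary_system P b0 *v x) $ j
    = (if j = b0 then (\<Sum>i\<in>UNIV. x $ i) else x $ j - (\<Sum>i\<in>UNIV. x $ i * P i j))"
proof -
  have "(\<Sum>i\<in>UNIV. of_bool (i = j) * x $ i) = (\<Sum>i\<in>UNIV. if i = j then x $ j else 0)"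
    by (intro sum.cong) auto
  then have "(\<Sum>i\<in>UNIV. (of_bool (i = j) - P i j) * x $ i) = x $ j - (\<Sum>i\<in>UNIV. x $ i * P i j)"
    by (simp add: left_diff_distrib sum_subtractf mult.commute[of "P _ _"])
  then show ?thesis
    by (simp add: stationary_system_def matrix_vector_mult_def)
qed

lemma stationary_system_eq_axis_iff:
  fixes P :: "'b::finite \<Rightarrow> 'b \<Rightarrow> real"
  assumes "stochastic P"
  shows "stationary_system P b0 *v x = axis b0 t \<longleftrightarrow>
    (\<Sum>i\<in>UNIV. x $ i) = t \<and> (\<forall>j. (\<Sum>i\<in>UNIV. x $ i * P i j) = x $ j)"
proof
  assume eq: "stationary_system P b0 *v x = axis b0 t"
  define f where "f j = x $ j - (\<Sum>i\<in>UNIV. x $ i * P i j)" for j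
  have f_other: "f j = 0" if "j \<noteq> b0" for j
    using arg_cong[OF eq, of "\<lambda>v. v $ j"] that
    by (simp add: stationary_system_mult_nth axis_def f_def)
  have "(\<Sum>j\<in>UNIV. f j) = (\<Sum>j\<in>UNIV. x $ j) - (\<Sum>i\<in>UNIV. x $ i * (\<Sum>j\<in>UNIV. P i j))"
    unfolding f_def sum_subtractf sum_distrib_left by (subst (2) sum.swap) simp
  also have "\<dots> = 0"
    using assms by (simp add: stochastic_def)
  finally have "f b0 = 0"
    using f_other by (simp add: sum.remove[of UNIV b0])
  with f_other have "\<forall>j. (\<Sum>i\<in>UNIV. x $ i * P i j) = x $ j"
    by (metis f_def eq_iff_diff_eq_0)
  moreover have "(\<Sum>i\<in>UNIV. x $ i) = t"
    using arg_cong[OF eq, of "\<lambda>v. v $ b0"] by (simp add: stationary_system_mult_nth)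
  ultimately show "(\<Sum>i\<in>UNIV. x $ i) = t \<and> (\<forall>j. (\<Sum>i\<in>UNIV. x $ i * P i j) = x $ j)"
    by blast
qed (auto simp: vec_eq_iff stationary_system_mult_nth axis_def)

lemma det_stationary_system_nonzero:
  fixes P :: "'b::finite \<Rightarrow> 'b \<Rightarrow> real"
  assumes st: "stochastic P" and irr: "irreducible_matrix P"
  shows "det (stationary_system P b0) \<noteq> 0"
proof -
  have "x = 0" if "stationary_system P b0 *v x = 0" for x
  proof (rule ccontr)
    assume "x \<noteq> 0"
    then obtain j where "x $ j \<noteq> 0"
      by (auto simp: vec_eq_iff)
    define s where "s = sgn (x $ j)"
    have "s * x $ j > 0"
      using \<open>x $ j \<noteq> 0\<close> by (cases "x $ j > 0") (simp_all add: s_def)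
    have sum0: "(\<Sum>i\<in>UNIV. x $ i) = 0" and inv: "\<And>j. (\<Sum>i\<in>UNIV. x $ i * P i j) = x $ j"
      using that stationary_system_eq_axis_iff[OF st, of b0 x 0]
      by (simp_all add: axis_def zero_vec_def)
    then have "(\<Sum>i\<in>UNIV. s * x $ i * P i j) = s * x $ j" for j
      by (simp add: mult.assoc sum_distrib_left[symmetric])
    from invariant_vector_pos[OF st irr this \<open>s * x $ j > 0\<close>]
    have "s * x $ i > 0" for i .
    then have "(\<Sum>i\<in>UNIV. s * x $ i) > 0"
      by (intro sum_pos) auto
    with sum0 show False
      by (simp add: sum_distrib_left[symmetric])
  qed
  then have "invertible (stationary_system P b0)"
    by (simp add: invertible_left_inverse matrix_left_invertible_ker)
  then show ?thesis
    by (simp add: invertible_det_nz)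
qed

lemma stat_stationary_system:
  fixes P :: "'b::finite \<Rightarrow> 'b \<Rightarrow> real"
  assumes st: "stochastic P" and irr: "irreducible_matrix P"
  shows "stationary_dist P (stat P)"
    and "stationary_system P b0 *v (\<chi> i. stat P i) = axis b0 1"
proof -
  let ?N = "stationary_system P b0"
  have det: "det ?N \<noteq> 0"
    by (rule det_stationary_system_nonzero[OF st irr])
  obtain x where x: "?N *v x = axis b0 1"
    using cramer[OF det] by blast
  then have sum1: "(\<Sum>i\<in>UNIV. x $ i) = 1" and inv: "\<And>j. (\<Sum>i\<in>UNIV. x $ i * P i j) = x $ j"
    by (simp_all add: stationary_system_eq_axis_iff[OF st])
  have "\<exists>i0. x $ i0 > 0"
  proof (rule ccontr)
    assume "\<nexists>i0. x $ i0 > 0"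
    then have "(\<Sum>i\<in>UNIV. x $ i) \<le> 0"
      by (intro sum_nonpos) (simp add: not_less)
    with sum1 show False by simp
  qed
  then obtain i0 where "x $ i0 > 0" ..
  from invariant_vector_pos[OF st irr inv this]
  have "x $ i > 0" for i .
  then have dist: "stationary_dist P (\<lambda>i. x $ i)"
    using sum1 inv by (simp add: stationary_dist_def less_imp_le)
  have "q = (\<lambda>i. x $ i)" if "stationary_dist P q" for q
  proof -
    have "?N *v (\<chi> i. q i) = axis b0 1"
      using that by (simp add: stationary_system_eq_axis_iff[OF st] stationary_dist_def)
    then have "(\<chi> i. q i) = x"
      using x by (simp add: cramer[OF det])
    then show ?thesis by auto
  qed
  with dist have "stat P = (\<lambda>i. x $ i)"
    unfolding stat_def by (rule the_equality)
  with dist x show "stationary_dist P (stat P)" "?N *v (\<chi> i. stat P i) = axis b0 1"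
    by simp_all
qed

definition cramer_matrix :: "'r::comm_ring_1^'n^'n \<Rightarrow> 'r^'n \<Rightarrow> 'n \<Rightarrow> 'r^'n^'n" where
  "cramer_matrix A b k = (\<chi> i j. if j = k then b $ i else A $ i $ j)"

lemma det_cramer_matrix_stat:
  fixes P :: "'b::finite \<Rightarrow> 'b \<Rightarrow> real"
  assumes "stochastic P" "irreducible_matrix P"
  shows "det (cramer_matrix (stationary_system P b0) (axis b0 1) k)
    = stat P k * det (stationary_system P b0)"
proof -
  have "stationary_system P b0 *v (\<chi> i. stat P i) = axis b0 1"
    by (rule stat_stationary_system(2)[OF assms])
  from cramer_lemma[where A = "stationary_system P b0" and x = "\<chi> i. stat P i" and k = k,
      unfolded this]
  show ?thesis by (simp add: cramer_matrix_def)
qed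

section \<open>Expansions for a normally parameterized hidden Markov chain\<close>

locale normally_parameterized_hmm =
  fixes Phi :: "'b::finite \<Rightarrow> 'a" and D :: "real \<Rightarrow> 'b \<Rightarrow> 'b \<Rightarrow> real"
  assumes stochastic: "\<And>e. e > 0 \<Longrightarrow> stochastic (D e)"
    and normal: "normally_parameterized Phi D"
begin

lemma irreducible: "e > 0 \<Longrightarrow> irreducible_matrix (D e)"
  using normal by (simp add: normally_parameterized_def)

lemma D_nonneg: "e > 0 \<Longrightarrow> D e x y \<ge> 0"
  using stochastic by (simp add: stochastic_def)

lemma stat_stationary: "e > 0 \<Longrightarrow> stationary_dist (D e) (stat (D e))"
  using stat_stationary_system(1)[OF stochastic irreducible] .

definition trans_fps :: "'b \<Rightarrow> 'b \<Rightarrow> real fps" where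
  "trans_fps x y = (SOME F. (\<lambda>e. D e x y) has_fps_expansion_right F \<and> fps_nth F 0 = D 0 x y)"

lemma trans_expansion: "(\<lambda>e. D e x y) has_fps_expansion_right trans_fps x y"
  and trans_fps_nth_0: "fps_nth (trans_fps x y) 0 = D 0 x y"
proof -
  have "analytic_at_zero (\<lambda>e. D e x y)"
    using normal by (simp add: normally_parameterized_def)
  then have "\<exists>F. (\<lambda>e. D e x y) has_fps_expansion_right F \<and> fps_nth F 0 = D 0 x y"
    by (blast elim: analytic_at_zero_expansion)
  from someI_ex[OF this]
  show "(\<lambda>e. D e x y) has_fps_expansion_right trans_fps x y" "fps_nth (trans_fps x y) 0 = D 0 x y"
    unfolding trans_fps_def by blast+
qed

lemma trans_fps_minor_dvd:
  "Phi k = Phi l \<Longrightarrow> fps_X dvd trans_fps i k * trans_fps j l - trans_fps i l * trans_fps j k"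
  using normal weak_black_hole_minor_eq_0[of Phi "D 0" k l i j]
  by (simp add: fps_X_dvd_iff trans_fps_nth_0 normally_parameterized_def)

lemma backward_expansion:
  assumes "\<And>y. (\<lambda>e. c e y) has_fps_expansion_right C y"
  shows "(\<lambda>e. backward Phi (D e) w (c e) x) has_fps_expansion_right backward Phi trans_fps w C x"
  by (induction w arbitrary: x) (simp_all add: assms has_fps_expansion_right_sum
      has_fps_expansion_right_mult trans_expansion)

lemma stationary_system_expansion:
  "(\<lambda>e. stationary_system (D e) b0 $ i $ j)
    has_fps_expansion_right stationary_system trans_fps b0 $ i $ j"
  by (simp add: stationary_system_def
      has_fps_expansion_right_diff has_fps_expansion_right_of_bool trans_expansion)

definition stat_fps :: "'b \<Rightarrow> real fps" where
  "stat_fps y = (SOME F. (\<lambda>e. stat (D e) y) has_fps_expansion_right F)"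

lemma stat_expansion: "(\<lambda>e. stat (D e) y) has_fps_expansion_right stat_fps y"
proof -
  \<comment> \<open>any state can serve as the normalisation row\<close>
  fix b0 :: 'b
  let ?N = "\<lambda>P. stationary_system P b0"
    and ?C = "\<lambda>P. cramer_matrix (stationary_system P b0) (axis b0 1) y"
  have "\<forall>\<^sub>F e in at_right 0. det (?C (D e)) = stat (D e) y * det (?N (D e)) \<and>
      det (?N (D e)) \<noteq> 0 \<and> 0 \<le> stat (D e) y \<and> stat (D e) y \<le> 1"
    using eventually_at_right_less[of 0]
  proof eventually_elim
    case (elim e)
    have "stat (D e) x \<ge> 0" for x
      using stat_stationary[OF elim] by (simp add: stationary_dist_def)
    then have "stat (D e) y \<le> (\<Sum>x\<in>UNIV. stat (D e) x)"
      by (intro member_le_sum) simp_all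
    with stat_stationary[OF elim] show ?case
      by (simp add: stationary_dist_def det_cramer_matrix_stat stochastic irreducible elim
          det_stationary_system_nonzero)
  qed
  then have "\<forall>\<^sub>F e in at_right 0. \<bar>det (?C (D e))\<bar> \<le> \<bar>det (?N (D e))\<bar>"
    and "\<forall>\<^sub>F e in at_right 0. det (?C (D e)) / det (?N (D e)) = stat (D e) y"
    by (eventually_elim, simp add: abs_mult mult_le_cancel_right1)+
  moreover have "(\<lambda>e. det (?C (D e))) has_fps_expansion_right det (?C trans_fps)"
    "(\<lambda>e. det (?N (D e))) has_fps_expansion_right det (?N trans_fps)"
    by (auto intro!: has_fps_expansion_right_det stationary_system_expansion
        simp: cramer_matrix_def has_fps_expansion_right_of_bool axis_def)
  ultimately have
    "(\<lambda>e. stat (D e) y) has_fps_expansion_right det (?C trans_fps) / det (?N trans_fps)"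
    by (blast intro: has_fps_expansion_right_cong has_fps_expansion_right_divide)
  then show ?thesis
    unfolding stat_fps_def by (rule someI)
qed

definition word_fps :: "'a list \<Rightarrow> real fps" where
  "word_fps w = (\<Sum>x\<in>UNIV. stat_fps x * backward Phi trans_fps w (\<lambda>_. 1) x)"

definition cond_fps :: "'a list \<Rightarrow> 'a list \<Rightarrow> real fps" where
  "cond_fps u v = word_fps (v @ u) / word_fps v"

lemma word_prob_expansion: "(\<lambda>e. word_prob Phi (D e) w) has_fps_expansion_right word_fps w"
proof -
  have "(\<lambda>e. \<Sum>x\<in>UNIV. stat (D e) x * backward Phi (D e) w (\<lambda>_. 1) x)
      has_fps_expansion_right word_fps w"
    unfolding word_fps_def
    by (intro has_fps_expansion_right_sum has_fps_expansion_right_mult stat_expansion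
        backward_expansion has_fps_expansion_right_1)
  moreover have "\<forall>\<^sub>F e in at_right 0.
      (\<Sum>x\<in>UNIV. stat (D e) x * backward Phi (D e) w (\<lambda>_. 1) x) = word_prob Phi (D e) w"
    using eventually_at_right_less[of 0]
    by eventually_elim (simp add: word_prob_eq_backward stat_stationary)
  ultimately show ?thesis
    by (rule has_fps_expansion_right_cong)
qed

lemma forward_expansion:
  "(\<lambda>e. forward Phi (D e) (stat (D e)) w y)
    has_fps_expansion_right forward Phi trans_fps stat_fps w y"
  unfolding forward_def
  by (intro has_fps_expansion_right_sum has_fps_expansion_right_mult stat_expansion
      backward_expansion has_fps_expansion_right_of_bool)

lemma word_prob_append:
  "e > 0 \<Longrightarrow> word_prob Phi (D e) (v @ w)
    = (\<Sum>y\<in>UNIV. forward Phi (D e) (stat (D e)) v y * backward Phi (D e) w (\<lambda>_. 1) y)"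
  by (simp add: word_prob_eq_backward stat_stationary sum_backward_append)

lemma word_fps_append:
  "word_fps (v @ w)
    = (\<Sum>y\<in>UNIV. forward Phi trans_fps stat_fps v y * backward Phi trans_fps w (\<lambda>_. 1) y)"
  unfolding word_fps_def by (rule sum_backward_append)

lemma forward_le_word_prob:
  assumes "e > 0"
  shows "0 \<le> forward Phi (D e) (stat (D e)) v y"
    and "forward Phi (D e) (stat (D e)) v y \<le> word_prob Phi (D e) v"
proof -
  have stat_nonneg: "stat (D e) x \<ge> 0" for x
    using stat_stationary[OF assms] by (simp add: stationary_dist_def)
  show nonneg: "0 \<le> forward Phi (D e) (stat (D e)) v y" for y
    by (intro forward_nonneg D_nonneg[OF assms] stat_nonneg)
  have "word_prob Phi (D e) v = (\<Sum>y\<in>UNIV. forward Phi (D e) (stat (D e)) v y)"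
    using word_prob_append[OF assms, of v "[]"] by simp
  then show "forward Phi (D e) (stat (D e)) v y \<le> word_prob Phi (D e) v"
    using nonneg by (simp add: member_le_sum)
qed

lemma word_prob_append_le:
  assumes "e > 0"
  shows "0 \<le> word_prob Phi (D e) (v @ w)" and "word_prob Phi (D e) (v @ w) \<le> word_prob Phi (D e) v"
proof -
  have "word_prob Phi (D e) v = (\<Sum>y\<in>UNIV. forward Phi (D e) (stat (D e)) v y)"
    using word_prob_append[OF assms, of v "[]"] by simp
  moreover have "0 \<le> backward Phi (D e) w (\<lambda>_. 1) y" "backward Phi (D e) w (\<lambda>_. 1) y \<le> 1" for y
    using backward_nonneg[of "D e" "\<lambda>_. 1"] D_nonneg[OF assms]
      backward_le_1[OF stochastic[OF assms]]
    by simp_all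
  ultimately show "0 \<le> word_prob Phi (D e) (v @ w)"
    "word_prob Phi (D e) (v @ w) \<le> word_prob Phi (D e) v"
    using forward_le_word_prob(1)[OF assms]
    by (simp_all add: word_prob_append[OF assms] sum_nonneg sum_mono mult_left_le)
qed

lemma cond_prob_expansion: "cond_prob Phi D u v has_fps_expansion_right cond_fps u v"
proof -
  have "\<forall>\<^sub>F e in at_right 0. \<bar>word_prob Phi (D e) (v @ u)\<bar> \<le> \<bar>word_prob Phi (D e) v\<bar>"
    using eventually_at_right_less[of 0]
  proof eventually_elim
    case (elim e)
    with word_prob_append_le[OF elim, of v u] word_prob_append_le[OF elim, of v "[]"]
    show ?case by simp
  qed
  from has_fps_expansion_right_divide[OF word_prob_expansion word_prob_expansion this]
  show ?thesis
    unfolding cond_fps_def cond_prob_def .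
qed

lemma cond_fps_mult_word_fps: "cond_fps u v * word_fps v = word_fps (v @ u)"
proof -
  have "\<forall>\<^sub>F e in at_right 0.
      cond_prob Phi D u v e * word_prob Phi (D e) v = word_prob Phi (D e) (v @ u)"
    using eventually_at_right_less[of 0]
  proof eventually_elim
    case (elim e)
    then show ?case
      using word_prob_append_le[OF elim, of v u]
      by (cases "word_prob Phi (D e) v = 0") (simp_all add: cond_prob_def)
  qed
  with has_fps_expansion_right_mult[OF cond_prob_expansion word_prob_expansion]
  have "(\<lambda>e. word_prob Phi (D e) (v @ u)) has_fps_expansion_right cond_fps u v * word_fps v"
    by (rule has_fps_expansion_right_cong)
  then show ?thesis
    using word_prob_expansion has_fps_expansion_right_unique by blast
qed

lemma forward_fps_dvd:
  assumes "word_fps v \<noteq> 0"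
  shows "fps_X ^ subdegree (word_fps v) dvd forward Phi trans_fps stat_fps v y"
proof -
  have "\<forall>\<^sub>F e in at_right 0. \<bar>forward Phi (D e) (stat (D e)) v y\<bar> \<le> \<bar>word_prob Phi (D e) v\<bar>"
    using eventually_at_right_less[of 0]
  proof eventually_elim
    case (elim e)
    with forward_le_word_prob[OF elim, of v y] show ?case by simp
  qed
  from abs_le_imp_subdegree_le[OF forward_expansion word_prob_expansion _ assms this]
  show ?thesis
    by (auto simp: fps_X_power_dvd_iff)
qed

lemma word_fps_minor_dvd:
  assumes "word_fps v \<noteq> 0" "word_fps v' \<noteq> 0"
  shows "fps_X ^ (subdegree (word_fps v) + subdegree (word_fps v') + length u) dvd
    word_fps (v @ u @ w) * word_fps (v' @ u) - word_fps (v' @ u @ w) * word_fps (v @ u)"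
proof -
  let ?A = "forward Phi trans_fps stat_fps v" and ?A' = "forward Phi trans_fps stat_fps v'"
  let ?U = "backward Phi trans_fps u (backward Phi trans_fps w (\<lambda>_. 1))"
    and ?V = "backward Phi trans_fps u (\<lambda>_. 1)"
  have "word_fps (v @ u @ w) * word_fps (v' @ u) - word_fps (v' @ u @ w) * word_fps (v @ u)
      = (\<Sum>k\<in>UNIV. \<Sum>l\<in>UNIV. ?A k * ?A' l * (?U k * ?V l - ?U l * ?V k))"
    unfolding word_fps_append backward_append[abs_def] by (rule sum_product_minor)
  also have "fps_X ^ (subdegree (word_fps v) + subdegree (word_fps v') + length u) dvd \<dots>"
    unfolding power_add
    by (intro dvd_sum mult_dvd_mono forward_fps_dvd assms backward_minor_dvd trans_fps_minor_dvd)
  finally show ?thesis .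
qed

lemma cond_fps_letter_diff_dvd:
  assumes "cond_fps u v \<noteq> 0" "cond_fps u v' \<noteq> 0"
  shows "fps_X ^ (length u - subdegree (cond_fps u v) - subdegree (cond_fps u v'))
    dvd cond_fps [a] (v @ u) - cond_fps [a] (v' @ u)" (is "_ dvd ?G")
proof (cases "?G = 0")
  case False
  \<comment> \<open>\<open>x / 0 = 0\<close>, so a nonzero \<open>cond_fps u v\<close> forces \<open>word_fps v \<noteq> 0\<close>\<close>
  have Q: "word_fps v \<noteq> 0" "word_fps v' \<noteq> 0"
    using assms by (auto simp: cond_fps_def)
  have "word_fps (w @ u) = cond_fps u w * word_fps w"
    "word_fps (w @ u @ [a]) = cond_fps [a] (w @ u) * (cond_fps u w * word_fps w)" for w
    using cond_fps_mult_word_fps[of "[a]" "w @ u"] cond_fps_mult_word_fps[of u w] by simp_all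
  then have "word_fps (v @ u @ [a]) * word_fps (v' @ u) - word_fps (v' @ u @ [a]) * word_fps (v @ u)
      = ?G * (cond_fps u v * word_fps v) * (cond_fps u v' * word_fps v')"
    by (simp add: algebra_simps)
  with word_fps_minor_dvd[OF Q, of u "[a]"] False assms Q
  have "subdegree (word_fps v) + subdegree (word_fps v') + length u \<le> subdegree ?G
      + (subdegree (cond_fps u v) + subdegree (word_fps v))
      + (subdegree (cond_fps u v') + subdegree (word_fps v'))"
    by (simp add: fps_X_power_dvd_iff)
  then show ?thesis
    unfolding fps_X_power_dvd_iff by arith
qed simp

lemma taylor_coeffs_cond_prob_eq:
  assumes "ord0 (cond_prob Phi D u v) \<le> enat k" "ord0 (cond_prob Phi D u v') \<le> enat k"
    and "j + 2 * k < length u"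
  shows "taylor_coeffs (cond_prob Phi D [a] (v @ u)) j
    = taylor_coeffs (cond_prob Phi D [a] (v' @ u)) j"
proof -
  have "cond_fps u v \<noteq> 0" "subdegree (cond_fps u v) \<le> k"
    "cond_fps u v' \<noteq> 0" "subdegree (cond_fps u v') \<le> k"
    using assms(1,2) by (auto simp: ord0_eq[OF cond_prob_expansion] split: if_splits)
  then have "fps_X ^ (length u - subdegree (cond_fps u v) - subdegree (cond_fps u v')) dvd
      cond_fps [a] (v @ u) - cond_fps [a] (v' @ u)"
    by (intro cond_fps_letter_diff_dvd)
  moreover have "Suc j \<le> length u - subdegree (cond_fps u v) - subdegree (cond_fps u v')"
    using \<open>subdegree (cond_fps u v) \<le> k\<close> \<open>subdegree (cond_fps u v') \<le> k\<close> assms(3) by linarith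
  ultimately have "fps_X ^ Suc j dvd cond_fps [a] (v @ u) - cond_fps [a] (v' @ u)"
    by (rule power_le_dvd)
  then have "fps_nth (cond_fps [a] (v @ u)) j = fps_nth (cond_fps [a] (v' @ u)) j"
    unfolding fps_X_power_dvd_iff_nth by simp
  then show ?thesis
    by (simp add: taylor_coeffs_eq[OF cond_prob_expansion])
qed

end

theorem lemma2p5:
  fixes Phi :: "'b::finite \<Rightarrow> 'a::finite"
    and D :: "real \<Rightarrow> 'b \<Rightarrow> 'b \<Rightarrow> real"
    and z zh :: "'a list"
    and m mh n k :: nat
  assumes stoch: "\<forall>e\<ge>0. stochastic (D e)"
    and normal: "normally_parameterized Phi D"
    and len_z: "length z = m + 1"
    and len_zh: "length zh = mh + 1"
    and n_le: "n \<le> m" "n \<le> mh"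
    and agree: "drop (m - n) z = drop (mh - n) zh"
    and ord_z: "ord0 (cond_prob Phi D (take n (drop (m - n) z)) (take (m - n) z)) \<le> enat k"
    and ord_zh: "ord0 (cond_prob Phi D (take n (drop (mh - n) zh)) (take (mh - n) zh)) \<le> enat k"
  shows "\<forall>j. j + 4 * k + 1 \<le> n \<longrightarrow> bcoeff Phi D j z = bcoeff Phi D j zh"
proof (intro allI impI)
  fix j assume "j + 4 * k + 1 \<le> n"
  interpret normally_parameterized_hmm Phi D
    using stoch normal by unfold_locales simp_all
  define d where "d = drop (m - n) z"
  have "length d = Suc n"
    using len_z n_le by (simp add: d_def)
  then have d: "d = take n d @ [last d]"
    by (metis append_butlast_last_id butlast_conv_take diff_Suc_1 length_greater_0_conv
        zero_less_Suc)
  have "z = take (m - n) z @ take n d @ [last d]" "zh = take (mh - n) zh @ take n d @ [last d]"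
    using d append_take_drop_id[of "m - n" z] append_take_drop_id[of "mh - n" zh]
    by (simp_all add: d_def agree)
  moreover have "j + 2 * k < length (take n d)"
    using \<open>j + 4 * k + 1 \<le> n\<close> \<open>length d = Suc n\<close> by simp
  moreover have "taylor_coeffs (cond_prob Phi D [last d] (take (m - n) z @ take n d)) j
      = taylor_coeffs (cond_prob Phi D [last d] (take (mh - n) zh @ take n d)) j"
    using ord_z ord_zh \<open>j + 2 * k < length (take n d)\<close>
    by (intro taylor_coeffs_cond_prob_eq) (simp_all add: d_def agree)
  ultimately show "bcoeff Phi D j z = bcoeff Phi D j zh"
    unfolding bcoeff_def by (metis butlast_snoc last_snoc append_assoc)
qed

end
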